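(* Consider a position in the $K^4$-building game on a complete graph board $G$ in which it is the first player's turn. Suppose that $G$ contains a realised promising graph $H$ (of one of the six types described in the context), and suppose that there is no monochromatic $K^4$ on the board and no threat by the second player on the board, even if the vulnerable edges of $H$ are additionally regarded as edges claimed by the second player. Then the first player can play a sequence of moves, each of which creates a threat, the last of which creates two threats simultaneously; consequently the first player wins the game.
   Context: The $K^4$-building game on a complete graph $G$ (the board): two players, the first player (red) and the second player (blue), starting with the first player, alternately claim one not-yet-claimed edge of $G$ in their own colour. A player wins as soon as she/he has claimed all six edges on some set of four vertices; if neither ever does, the second player wins. A threat (by a player) is a set of four vertices of the board on which that player has claimed exactly five of the six edges and the sixth edge is unclaimed. Promising graphs. Each type below is a complete graph on the listed vertices with a colouring of some edges; red = claimed by the first player, blue = claimed by the second player, all other edges among the listed vertices are unclaimed, and certain edges are designated vulnerable. Type 1: vertices $a,b,c,d,e$; red $ab,ac,ad,ae,bc,cd$; blue $bd$; no vulnerable edges. Type 2: vertices $a,b,c,d,e$; red $ab,ac,ad,ae,bc$; vulnerable edge $bd$. Type 3: vertices $a,b,c,d,e,f$; red $ab,ac,ad,ae,af,bc$; blue $bd,be$; vulnerable edges $bf, ce$. Type 4: vertices $a,b,c,d,e,f$; red $ab,ac,ad,ae,af,bc$; blue $bd,ef$; vulnerable edges $be,bf$. Type 5: vertices $a,b,c,d,e,f,g$; red $ab,ac,ad,ae,af,ag,bc$; blue $bd,be,bf,ce,df$; vulnerable edges $bg,cd,cf$. Type 6: vertices $a,b,c,d,e,f,g$; red $ab,ac,ad,ae,af,ag,bc$;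 blue $bd,be,bf,cd,ce$; vulnerable edges $bg,cf,ef$. A promising graph of a given type is the coloured complete graph of that type in which additionally the vulnerable edges are claimed by the second player. A realised promising graph in the board $G$ is a set of vertices of $G$ such that the complete subgraph of $G$ on it, with the current claimed edges, is isomorphic (as an edge-coloured graph) to one of the six types above with the vulnerable edges unclaimed; i.e. among these vertices the claimed edges are exactly the red and blue edges listed, and the vulnerable edges (as well as all other unlisted edges) are unclaimed. *)

theory Defs
  imports Main
begin

text \<open>A position is given by the vertex set V of the board and the sets R (edges claimed
  by the first player, red) and B (edges claimed by the second player, blue).\<close>

definition board_edges :: "'a set \<Rightarrow> 'a set set" where
  "board_edges S = {e. e \<subseteq> S \<and> card e = 2}"

definition has_K4 :: "'a set \<Rightarrow> 'a set set \<Rightarrow> bool" where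
  "has_K4 V X \<longleftrightarrow> (\<exists>S. S \<subseteq> V \<and> card S = 4 \<and> board_edges S \<subseteq> X)"

definition threat :: "'a set \<Rightarrow> 'a set set \<Rightarrow> 'a set set \<Rightarrow> 'a set \<Rightarrow> bool" where
  "threat V X Y S \<longleftrightarrow> S \<subseteq> V \<and> card S = 4 \<and>
     (\<exists>e \<in> board_edges S. board_edges S - {e} \<subseteq> X \<and> e \<notin> X \<and> e \<notin> Y)"

text \<open>After a red move that does not
  immediately win, the board must still contain an unclaimed edge (otherwise the game ends
  and the second player wins), and every blue reply must neither complete a blue K4 nor
  lead to a position that is not a red win.\<close>
inductive red_wins :: "'a set \<Rightarrow> 'a set set \<Rightarrow> 'a set set \<Rightarrow> bool" for V :: "'a set" where
  immediate: "\<lbrakk> e \<in> board_edges V; e \<notin> R; e \<notin> B; has_K4 V (insert e R) \<rbrakk>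
     \<Longrightarrow> red_wins V R B"
| step: "\<lbrakk> e \<in> board_edges V; e \<notin> R; e \<notin> B;
           board_edges V - insert e R - B \<noteq> {};
           \<forall>f \<in> board_edges V - insert e R - B.
              \<not> has_K4 V (insert f B) \<and> red_wins V (insert e R) (insert f B) \<rbrakk>
     \<Longrightarrow> red_wins V R B"

text \<open>Promising graph types 1..6. Vertices a,b,c,d,e,f,g are encoded as 0,1,...,6.\<close>

definition pt_size :: "nat \<Rightarrow> nat" where
  "pt_size t = (if t \<le> 2 then 5 else if t \<le> 4 then 6 else 7)"

definition pt_red :: "nat \<Rightarrow> nat set set" where
  "pt_red t =
    (if t = 1 then {{0,1},{0,2},{0,3},{0,4},{1,2},{2,3}}
     else if t = 2 then {{0,1},{0,2},{0,3},{0,4},{1,2}}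
     else if t = 3 \<or> t = 4 then {{0,1},{0,2},{0,3},{0,4},{0,5},{1,2}}
     else {{0,1},{0,2},{0,3},{0,4},{0,5},{0,6},{1,2}})"

definition pt_blue :: "nat \<Rightarrow> nat set set" where
  "pt_blue t =
    (if t = 1 then {{1,3}}
     else if t = 2 then {}
     else if t = 3 then {{1,3},{1,4}}
     else if t = 4 then {{1,3},{4,5}}
     else if t = 5 then {{1,3},{1,4},{1,5},{2,4},{3,5}}
     else {{1,3},{1,4},{1,5},{2,3},{2,4}})"

definition pt_vul :: "nat \<Rightarrow> nat set set" where
  "pt_vul t =
    (if t = 1 then {}
     else if t = 2 then {{1,3}}
     else if t = 3 then {{1,5},{2,4}}
     else if t = 4 then {{1,4},{1,5}}
     else if t = 5 then {{1,6},{2,3},{2,5}}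
     else {{1,6},{2,5},{4,5}})"

definition realised :: "'a set \<Rightarrow> 'a set set \<Rightarrow> 'a set set \<Rightarrow> nat \<Rightarrow> (nat \<Rightarrow> 'a) \<Rightarrow> bool" where
  "realised V R B t f \<longleftrightarrow> t \<in> {1..6} \<and> inj_on f {..<pt_size t} \<and> f ` {..<pt_size t} \<subseteq> V \<and>
     (\<forall>i < pt_size t. \<forall>j < pt_size t. i \<noteq> j \<longrightarrow>
        ({f i, f j} \<in> R \<longleftrightarrow> {i, j} \<in> pt_red t) \<and>
        ({f i, f j} \<in> B \<longleftrightarrow> {i, j} \<in> pt_blue t))"

definition vul_edges :: "nat \<Rightarrow> (nat \<Rightarrow> 'a) \<Rightarrow> 'a set set" where
  "vul_edges t f = (\<lambda>e. f ` e) ` pt_vul t"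

end

theory Submission
  imports Defs
begin

text \<open>Each move of the first player completes five edges of some \<open>K\<^sub>4\<close>, so the second
  player must answer on the sixth edge, and in the strategies below that edge is always a
  vulnerable one. Hence the blue edges stay inside \<open>B \<union> vul_edges t f\<close>, where by hypothesis there
  is neither a blue \<open>K\<^sub>4\<close> nor a blue threat, so no blue reply ever completes a blue \<open>K\<^sub>4\<close>.
  The last move creates two threats at once, of which the second player can block only one.\<close>

lemma doubleton_in_board_edges [simp]:
  "{x, y} \<in> board_edges S \<longleftrightarrow> x \<noteq> y \<and> x \<in> S \<and> y \<in> S"
  by (auto simp: board_edges_def card_insert_if)

lemma board_edges_4:
  "board_edges {a, b, c, d} \<subseteq> {{a, b}, {a, c}, {a, d}, {b, c}, {b, d}, {c, d}}"
proof
  fix p assume "p \<in> board_edges {a, b, c, d}"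
  then obtain u v where p: "p = {u, v}" "u \<noteq> v" and "u \<in> {a, b, c, d}" "v \<in> {a, b, c, d}"
    unfolding board_edges_def by (auto simp: card_2_iff)
  then show "p \<in> {{a, b}, {a, c}, {a, d}, {b, c}, {b, d}, {c, d}}"
    by (elim insertE emptyE) (auto simp: doubleton_eq_iff)
qed

lemma has_K4I:
  assumes "distinct [a, b, c, d]" "{a, b, c, d} \<subseteq> V"
    and "{a, b} \<in> X" "{a, c} \<in> X" "{a, d} \<in> X" "{b, c} \<in> X" "{b, d} \<in> X" "{c, d} \<in> X"
  shows "has_K4 V X"
  unfolding has_K4_def
  using assms board_edges_4[of a b c d] by (intro exI[of _ "{a, b, c, d}"]) auto

lemma image_in_board_edges:
  assumes "inj_on f U" "f ` U \<subseteq> V" "p \<in> board_edges U"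
  shows "f ` p \<in> board_edges V"
  using assms card_image[OF inj_on_subset[OF assms(1)]] unfolding board_edges_def by auto

lemma board_edges_image:
  assumes "inj_on f S"
  shows "board_edges (f ` S) = image f ` board_edges S"
proof
  show "image f ` board_edges S \<subseteq> board_edges (f ` S)"
    using image_in_board_edges[OF assms] by blast
  show "board_edges (f ` S) \<subseteq> image f ` board_edges S"
  proof
    fix q assume q: "q \<in> board_edges (f ` S)"
    then obtain p where p: "p \<subseteq> S" "q = f ` p"
      unfolding board_edges_def by (auto simp: subset_image_iff)
    with q have "card p = 2"
      using card_image[OF inj_on_subset[OF assms p(1)]] by (simp add: board_edges_def)
    with p show "q \<in> image f ` board_edges S" by (auto simp: board_edges_def)
  qed
qed

lemma inj_on_image_board_edges:
  assumes "inj_on f U"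
  shows "inj_on (image f) (board_edges U)"
  using inj_on_image_Pow[OF assms] by (rule inj_on_subset) (auto simp: board_edges_def)

lemma red_wins_threat:
  assumes "e \<in> board_edges V" "e \<notin> R \<union> B"
    and "m \<in> board_edges V" "m \<notin> insert e (R \<union> B)" "has_K4 V (insert m (insert e R))"
    and "\<And>g. g \<notin> insert e R \<Longrightarrow> \<not> has_K4 V (insert g B)"
    and "red_wins V (insert e R) (insert m B)"
  shows "red_wins V R B"
proof (rule red_wins.step)
  show "board_edges V - insert e R - B \<noteq> {}" using assms(3,4) by blast
  show "\<forall>g \<in> board_edges V - insert e R - B.
      \<not> has_K4 V (insert g B) \<and> red_wins V (insert e R) (insert g B)"
  proof
    fix g assume g: "g \<in> board_edges V - insert e R - B"
    have "red_wins V (insert e R) (insert g B)"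
    proof (cases "g = m")
      case False
      then show ?thesis using assms(3-5) by (intro red_wins.immediate) auto
    qed (use assms(7) in simp)
    with g assms(6) show "\<not> has_K4 V (insert g B) \<and> red_wins V (insert e R) (insert g B)"
      by blast
  qed
qed (use assms(1,2) in auto)

lemma red_wins_double_threat:
  assumes "e \<in> board_edges V" "e \<notin> R \<union> B"
    and "m\<^sub>1 \<in> board_edges V" "m\<^sub>1 \<notin> insert e (R \<union> B)" "has_K4 V (insert m\<^sub>1 (insert e R))"
    and "m\<^sub>2 \<in> board_edges V" "m\<^sub>2 \<notin> insert e (R \<union> B)" "has_K4 V (insert m\<^sub>2 (insert e R))"
    and "m\<^sub>1 \<noteq> m\<^sub>2"
    and "\<And>g. g \<notin> insert e R \<Longrightarrow> \<not> has_K4 V (insert g B)"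
  shows "red_wins V R B"
proof (rule red_wins.step)
  show "board_edges V - insert e R - B \<noteq> {}" using assms(3,4) by blast
  show "\<forall>g \<in> board_edges V - insert e R - B.
      \<not> has_K4 V (insert g B) \<and> red_wins V (insert e R) (insert g B)"
  proof
    fix g assume g: "g \<in> board_edges V - insert e R - B"
    have "red_wins V (insert e R) (insert g B)"
    proof (cases "g = m\<^sub>1")
      case True
      then show ?thesis using assms(6-9) by (intro red_wins.immediate) auto
    next
      case False
      then show ?thesis using assms(3-5) by (intro red_wins.immediate) auto
    qed
    with g assms(10) show "\<not> has_K4 V (insert g B) \<and> red_wins V (insert e R) (insert g B)"
      by blast
  qed
qed (use assms(1,2) in auto)

lemma no_blue_K4_after_reply:
  assumes "\<not> has_K4 V Y" "\<not> (\<exists>S. threat V Y X S)" "B \<subseteq> Y" "g \<notin> X"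
  shows "\<not> has_K4 V (insert g B)"
proof
  assume "has_K4 V (insert g B)"
  then obtain S where S: "S \<subseteq> V" "card S = 4" "board_edges S \<subseteq> insert g B"
    unfolding has_K4_def by blast
  show False
  proof (cases "g \<in> board_edges S - Y")
    case True
    with S assms(3,4) have "threat V Y X S" unfolding threat_def by blast
    with assms(2) show False by blast
  next
    case False
    with S assms(3) have "board_edges S \<subseteq> Y" by blast
    with S assms(1) show False unfolding has_K4_def by blast
  qed
qed

definition pulls_back_to :: "('b \<Rightarrow> 'a) \<Rightarrow> 'b set \<Rightarrow> 'a set set \<Rightarrow> 'b set set \<Rightarrow> bool" where
  "pulls_back_to f U X P \<longleftrightarrow> (\<forall>p \<in> board_edges U. f ` p \<in> X \<longleftrightarrow> p \<in> P)"

lemma pulls_back_toD: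
  "pulls_back_to f U X P \<Longrightarrow> p \<in> board_edges U \<Longrightarrow> f ` p \<in> X \<longleftrightarrow> p \<in> P"
  unfolding pulls_back_to_def by blast

lemma pulls_back_to_insert:
  assumes "pulls_back_to f U X P" "inj_on f U" "e \<in> board_edges U"
  shows "pulls_back_to f U (insert (f ` e) X) (insert e P)"
  using assms inj_on_image_board_edges[OF assms(2)] unfolding pulls_back_to_def
  by (auto dest: inj_onD)

lemma has_K4_pullback:
  assumes "has_K4 U P" "pulls_back_to f U X P" "inj_on f U" "f ` U \<subseteq> V"
  shows "has_K4 V X"
proof -
  obtain S where S: "S \<subseteq> U" "card S = 4" "board_edges S \<subseteq> P"
    using assms(1) unfolding has_K4_def by blast
  have inj: "inj_on f S" using inj_on_subset[OF assms(3) S(1)] .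
  have "board_edges S \<subseteq> board_edges U" using S(1) by (auto simp: board_edges_def)
  with S(3) assms(2) have "board_edges (f ` S) \<subseteq> X"
    unfolding board_edges_image[OF inj] pulls_back_to_def by blast
  moreover have "f ` S \<subseteq> V" "card (f ` S) = 4"
    using S assms(4) card_image[OF inj] by auto
  ultimately show ?thesis unfolding has_K4_def by blast
qed

lemma threat_pullback:
  assumes "pulls_back_to f U R P" "pulls_back_to f U B Q" "inj_on f U" "f ` U \<subseteq> V"
    and "e \<in> board_edges U" "e \<notin> P \<union> Q"
    and "m \<in> board_edges U" "m \<notin> insert e (P \<union> Q)" "has_K4 U (insert m (insert e P))"
  shows "f ` e \<in> board_edges V" "f ` e \<notin> R \<union> B"
    and "f ` m \<in> board_edges V" "f ` m \<notin> insert (f ` e) (R \<union> B)"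
    and "has_K4 V (insert (f ` m) (insert (f ` e) R))"
proof -
  have R': "pulls_back_to f U (insert (f ` e) R) (insert e P)"
    using pulls_back_to_insert[OF assms(1,3,5)] .
  show "f ` e \<in> board_edges V" "f ` m \<in> board_edges V"
    using assms(5,7) image_in_board_edges[OF assms(3,4)] by blast+
  show "f ` e \<notin> R \<union> B" "f ` m \<notin> insert (f ` e) (R \<union> B)"
    using assms(5-8) pulls_back_toD[OF assms(1)] pulls_back_toD[OF assms(2)] pulls_back_toD[OF R']
    by auto
  show "has_K4 V (insert (f ` m) (insert (f ` e) R))"
    using has_K4_pullback[OF assms(9) pulls_back_to_insert[OF R' assms(3,7)] assms(3,4)] .
qed

text \<open>Only the forced blue replies are recorded: after any other reply the first player
  completes the threatened \<open>K\<^sub>4\<close> at once.\<close>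

inductive red_forces :: "'a set \<Rightarrow> 'a set set \<Rightarrow> 'a set set \<Rightarrow> 'a set set \<Rightarrow> bool"
  for U :: "'a set" and W :: "'a set set" where
  double_threat:
    "\<lbrakk> e \<in> board_edges U; e \<notin> P \<union> Q;
       m\<^sub>1 \<in> board_edges U; m\<^sub>1 \<notin> insert e (P \<union> Q); has_K4 U (insert m\<^sub>1 (insert e P));
       m\<^sub>2 \<in> board_edges U; m\<^sub>2 \<notin> insert e (P \<union> Q); has_K4 U (insert m\<^sub>2 (insert e P));
       m\<^sub>1 \<noteq> m\<^sub>2 \<rbrakk>
     \<Longrightarrow> red_forces U W P Q"
| threat:
    "\<lbrakk> red_forces U W (insert e P) (insert m Q);
       e \<in> board_edges U; e \<notin> P \<union> Q;
       m \<in> board_edges U \<inter> W; m \<notin> insert e (P \<union> Q); has_K4 U (insert m (insert e P)) \<rbrakk>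
     \<Longrightarrow> red_forces U W P Q"

lemma red_wins_if_red_forces:
  assumes "red_forces U W P Q"
    and "pulls_back_to f U R P" "pulls_back_to f U B Q"
    and "R\<^sub>0 \<subseteq> R" "B \<subseteq> B\<^sub>0 \<union> image f ` W"
    and inj: "inj_on f U" and into: "f ` U \<subseteq> V"
    and "\<not> has_K4 V (B\<^sub>0 \<union> image f ` W)" "\<not> (\<exists>S. threat V (B\<^sub>0 \<union> image f ` W) R\<^sub>0 S)"
  shows "red_wins V R B"
  using assms(1-5)
proof (induction arbitrary: R B rule: red_forces.induct)
  case (double_threat e P Q m\<^sub>1 m\<^sub>2)
  note move\<^sub>1 = threat_pullback[OF double_threat.prems(1,2) inj into double_threat.hyps(1-5)]
  note move\<^sub>2 = threat_pullback[OF double_threat.prems(1,2) inj into double_threat.hyps(1,2,6-8)]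
  show ?case
  proof (rule red_wins_double_threat[OF move\<^sub>1 move\<^sub>2(3-5)])
    show "f ` m\<^sub>1 \<noteq> f ` m\<^sub>2"
      using double_threat.hyps(3,6,9) inj_on_image_board_edges[OF inj] by (auto dest: inj_onD)
    show "\<not> has_K4 V (insert g B)" if "g \<notin> insert (f ` e) R" for g
      using no_blue_K4_after_reply[OF assms(8,9)] that double_threat.prems(3,4) by blast
  qed
next
  case (threat e P m Q)
  have m: "m \<in> board_edges U" using threat.hyps(4) by blast
  have "\<not> has_K4 V (insert g B)" if "g \<notin> insert (f ` e) R" for g
    using no_blue_K4_after_reply[OF assms(8,9)] that threat.prems(3,4) by blast
  moreover have "red_wins V (insert (f ` e) R) (insert (f ` m) B)"
  proof (rule threat.IH)
    show "pulls_back_to f U (insert (f ` e) R) (insert e P)"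
      using pulls_back_to_insert[OF threat.prems(1) inj threat.hyps(2)] .
    show "pulls_back_to f U (insert (f ` m) B) (insert m Q)"
      using pulls_back_to_insert[OF threat.prems(2) inj m] .
    show "R\<^sub>0 \<subseteq> insert (f ` e) R" "insert (f ` m) B \<subseteq> B\<^sub>0 \<union> image f ` W"
      using threat.hyps(4) threat.prems(3,4) by blast+
  qed
  ultimately show ?case
    by (rule red_wins_threat[OF threat_pullback[OF threat.prems(1,2) inj into threat.hyps(2,3) m
          threat.hyps(5,6)]])
qed

lemmas promising_type_simps = pt_red_def pt_blue_def pt_vul_def doubleton_eq_iff

lemma red_forces_type1: "red_forces {..<5} W (pt_red 1) (pt_blue 1)"
  by (rule red_forces.double_threat[where e = "{2, 4}" and m\<^sub>1 = "{1, 4}" and m\<^sub>2 = "{3, 4}",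
        OF _ _ _ _ has_K4I[of 0 1 2 4] _ _ has_K4I[of 0 2 3 4]])
    (simp_all add: promising_type_simps)

lemma red_forces_type2: "red_forces {..<5} (pt_vul 2) (pt_red 2) (pt_blue 2)"
proof -
  have "red_forces {..<5} (pt_vul 2) (insert {2, 3} (pt_red 2)) (insert {1, 3} (pt_blue 2))"
    using red_forces_type1 by (simp add: pt_red_def pt_blue_def insert_commute)
  then show ?thesis
    by (rule red_forces.threat[OF _ _ _ _ _ has_K4I[of 0 1 2 3]]) (simp_all add: promising_type_simps)
qed

lemma red_forces_type3: "red_forces {..<6} (pt_vul 3) (pt_red 3) (pt_blue 3)"
proof -
  have "red_forces {..<6} (pt_vul 3)
      (insert {4, 5} (insert {2, 5} (pt_red 3))) (insert {2, 4} (insert {1, 5} (pt_blue 3)))"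
    by (rule red_forces.double_threat[where e = "{3, 5}" and m\<^sub>1 = "{2, 3}" and m\<^sub>2 = "{3, 4}",
          OF _ _ _ _ has_K4I[of 0 2 3 5] _ _ has_K4I[of 0 3 4 5]])
      (simp_all add: promising_type_simps)
  then have "red_forces {..<6} (pt_vul 3) (insert {2, 5} (pt_red 3)) (insert {1, 5} (pt_blue 3))"
    by (rule red_forces.threat[OF _ _ _ _ _ has_K4I[of 0 2 4 5]]) (simp_all add: promising_type_simps)
  then show ?thesis
    by (rule red_forces.threat[OF _ _ _ _ _ has_K4I[of 0 1 2 5]]) (simp_all add: promising_type_simps)
qed

lemma red_forces_type4: "red_forces {..<6} (pt_vul 4) (pt_red 4) (pt_blue 4)"
proof -
  have "red_forces {..<6} (pt_vul 4)
      (insert {2, 5} (insert {2, 4} (pt_red 4))) (insert {1, 5} (insert {1, 4} (pt_blue 4)))"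
    by (rule red_forces.double_threat[where e = "{2, 3}" and m\<^sub>1 = "{3, 4}" and m\<^sub>2 = "{3, 5}",
          OF _ _ _ _ has_K4I[of 0 2 3 4] _ _ has_K4I[of 0 2 3 5]])
      (simp_all add: promising_type_simps)
  then have "red_forces {..<6} (pt_vul 4) (insert {2, 4} (pt_red 4)) (insert {1, 4} (pt_blue 4))"
    by (rule red_forces.threat[OF _ _ _ _ _ has_K4I[of 0 1 2 5]]) (simp_all add: promising_type_simps)
  then show ?thesis
    by (rule red_forces.threat[OF _ _ _ _ _ has_K4I[of 0 1 2 4]]) (simp_all add: promising_type_simps)
qed

lemma red_forces_type5: "red_forces {..<7} (pt_vul 5) (pt_red 5) (pt_blue 5)"
proof -
  have "red_forces {..<7} (pt_vul 5)
      (insert {3, 6} (insert {5, 6} (insert {2, 6} (pt_red 5))))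
      (insert {2, 3} (insert {2, 5} (insert {1, 6} (pt_blue 5))))"
    by (rule red_forces.double_threat[where e = "{4, 6}" and m\<^sub>1 = "{3, 4}" and m\<^sub>2 = "{4, 5}",
          OF _ _ _ _ has_K4I[of 0 3 4 6] _ _ has_K4I[of 0 4 5 6]])
      (simp_all add: promising_type_simps)
  then have "red_forces {..<7} (pt_vul 5)
      (insert {5, 6} (insert {2, 6} (pt_red 5))) (insert {2, 5} (insert {1, 6} (pt_blue 5)))"
    by (rule red_forces.threat[OF _ _ _ _ _ has_K4I[of 0 2 3 6]]) (simp_all add: promising_type_simps)
  then have "red_forces {..<7} (pt_vul 5) (insert {2, 6} (pt_red 5)) (insert {1, 6} (pt_blue 5))"
    by (rule red_forces.threat[OF _ _ _ _ _ has_K4I[of 0 2 5 6]]) (simp_all add: promising_type_simps)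
  then show ?thesis
    by (rule red_forces.threat[OF _ _ _ _ _ has_K4I[of 0 1 2 6]]) (simp_all add: promising_type_simps)
qed

lemma red_forces_type6: "red_forces {..<7} (pt_vul 6) (pt_red 6) (pt_blue 6)"
proof -
  have "red_forces {..<7} (pt_vul 6)
      (insert {4, 6} (insert {5, 6} (insert {2, 6} (pt_red 6))))
      (insert {4, 5} (insert {2, 5} (insert {1, 6} (pt_blue 6))))"
    by (rule red_forces.double_threat[where e = "{3, 6}" and m\<^sub>1 = "{3, 4}" and m\<^sub>2 = "{3, 5}",
          OF _ _ _ _ has_K4I[of 0 3 4 6] _ _ has_K4I[of 0 3 5 6]])
      (simp_all add: promising_type_simps)
  then have "red_forces {..<7} (pt_vul 6)
      (insert {5, 6} (insert {2, 6} (pt_red 6))) (insert {2, 5} (insert {1, 6} (pt_blue 6)))"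
    by (rule red_forces.threat[OF _ _ _ _ _ has_K4I[of 0 4 5 6]]) (simp_all add: promising_type_simps)
  then have "red_forces {..<7} (pt_vul 6) (insert {2, 6} (pt_red 6)) (insert {1, 6} (pt_blue 6))"
    by (rule red_forces.threat[OF _ _ _ _ _ has_K4I[of 0 2 5 6]]) (simp_all add: promising_type_simps)
  then show ?thesis
    by (rule red_forces.threat[OF _ _ _ _ _ has_K4I[of 0 1 2 6]]) (simp_all add: promising_type_simps)
qed

lemma red_forces_promising:
  assumes "t \<in> {1..6}"
  shows "red_forces {..<pt_size t} (pt_vul t) (pt_red t) (pt_blue t)"
proof -
  from assms have "t = 1 \<or> t = 2 \<or> t = 3 \<or> t = 4 \<or> t = 5 \<or> t = 6" by auto
  then show ?thesis
    using red_forces_type1 red_forces_type2 red_forces_type3 red_forces_type4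
      red_forces_type5 red_forces_type6
    by (elim disjE) (simp_all add: pt_size_def)
qed

lemma realised_pulls_back:
  assumes "realised V R B t f"
  shows "pulls_back_to f {..<pt_size t} R (pt_red t)" "pulls_back_to f {..<pt_size t} B (pt_blue t)"
proof -
  have "(f ` p \<in> R \<longleftrightarrow> p \<in> pt_red t) \<and> (f ` p \<in> B \<longleftrightarrow> p \<in> pt_blue t)"
    if "p \<in> board_edges {..<pt_size t}" for p
  proof -
    from that have "card p = 2" "p \<subseteq> {..<pt_size t}" by (simp_all add: board_edges_def)
    then obtain i j where "p = {i, j}" "i \<noteq> j" "i < pt_size t" "j < pt_size t"
      by (auto simp: card_2_iff)
    with assms show ?thesis unfolding realised_def by simp
  qed
  then show "pulls_back_to f {..<pt_size t} R (pt_red t)" "pulls_back_to f {..<pt_size t} B (pt_blue t)"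
    unfolding pulls_back_to_def by blast+
qed

theorem lemma3p2:
  fixes V :: "'a set" and R B :: "'a set set" and t :: nat and f :: "nat \<Rightarrow> 'a"
  assumes "R \<subseteq> board_edges V" and "B \<subseteq> board_edges V" and "R \<inter> B = {}"
    and "realised V R B t f"
    and "\<not> has_K4 V R" and "\<not> has_K4 V B" and "\<not> has_K4 V (B \<union> vul_edges t f)"
    and "\<not> (\<exists>S. threat V B R S)"
    and "\<not> (\<exists>S. threat V (B \<union> vul_edges t f) R S)"
  shows "red_wins V R B"
proof -
  from assms(4) have t: "t \<in> {1..6}"
    and inj: "inj_on f {..<pt_size t}" and into: "f ` {..<pt_size t} \<subseteq> V"
    unfolding realised_def by blast+
  have "B \<subseteq> B \<union> image f ` pt_vul t" by blast
  from red_wins_if_red_forces[OF red_forces_promising[OF t] realised_pulls_back[OF assms(4)]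
      order_refl this inj into]
  show ?thesis using assms(7,9) unfolding vul_edges_def by blast
qed

end
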